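(* Let $\mathcal{F}$ be a set of functions satisfying premise (P) below, and let $F\in\mathcal{F}$ have even arity. Then either every closed $\{\neq_2\}\mid\{F\}$-network (with any positive number of $F$-side vertices) has value $0$, or every such network has nonzero value.
   Context: $\neq_2(x,y)=1$ if $x\ne y$ and $0$ otherwise. $\mathrm{Holant}_{\neq}(\mathcal{F})$ denotes $\#\{\neq_2\}\mid\mathcal{F}$: inputs are finite bipartite multigraphs where every vertex on one side has degree 2 and carries $\neq_2$, and every vertex $v$ on the other ("$F$-side") carries some $F_v\in\mathcal{F}$ of arity $\deg(v)$ with an ordering of incident edges; value $\sum_{\sigma:E\to\{0,1\}}\prod(\text{vertex functions})$. Gadgets: such networks with dangling edges at $F$-side vertices; realizable functions are functions of gadgets. Premise (P): every realizable binary function is $\lambda\cdot\neq_2$ ($\lambda\in\mathbb{C}$), and every realizable arity-4 function is $\lambda\,\neq_2(x_{\tau(1)},x_{\tau(2)})\neq_2(x_{\tau(3)},x_{\tau(4)})$ for some $\lambda\in\mathbb{C}$ and permutation $\tau$ of $\{1,2,3,4\}$. *)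

theory Defs
  imports Complex_Main "HOL-Library.FuncSet" "HOL-Combinatorics.Permutations"
begin

text \<open>A (complex-valued, Boolean-domain) signature is a pair (n, f) of an arity n and a
  function f on bit strings; only the values of f on lists of length n matter.\<close>
type_synonym signature = "nat \<times> (bool list \<Rightarrow> complex)"

definition neq2 :: "bool \<Rightarrow> bool \<Rightarrow> complex" where
  "neq2 x y = (if x \<noteq> y then 1 else 0)"

text \<open>A gadget / network in Holant_neq: F-side vertices 0..<m, vertex v carries signature
  lab v with ordered incident edge slots (v,0), ..., (v, arity-1).  Each edge is incident to
  exactly one F-side slot, so edge variables are indexed by slots.  W lists the degree-2
  vertices carrying neq2, each given by the two F-side slots its two edges attach to.
  ds lists the dangling edges (in order).\<close>
definition slots :: "nat \<Rightarrow> (nat \<Rightarrow> signature) \<Rightarrow> (nat \<times> nat) set" where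
  "slots m lab = {(v, i). v < m \<and> i < fst (lab v)}"

definition valid_gadget ::
  "signature set \<Rightarrow> nat \<Rightarrow> (nat \<Rightarrow> signature) \<Rightarrow> ((nat \<times> nat) \<times> (nat \<times> nat)) list
     \<Rightarrow> (nat \<times> nat) list \<Rightarrow> bool" where
  "valid_gadget \<F> m lab W ds \<longleftrightarrow>
     (\<forall>v<m. lab v \<in> \<F>) \<and>
     distinct (concat (map (\<lambda>w. [fst w, snd w]) W) @ ds) \<and>
     set (concat (map (\<lambda>w. [fst w, snd w]) W) @ ds) = slots m lab"

definition gadget_fn ::
  "nat \<Rightarrow> (nat \<Rightarrow> signature) \<Rightarrow> ((nat \<times> nat) \<times> (nat \<times> nat)) list
     \<Rightarrow> (nat \<times> nat) list \<Rightarrow> bool list \<Rightarrow> complex" where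
  "gadget_fn m lab W ds x =
     (\<Sum>\<sigma> \<in> {\<sigma> \<in> slots m lab \<rightarrow>\<^sub>E (UNIV :: bool set). \<forall>j < length ds. \<sigma> (ds ! j) = x ! j}.
        (\<Prod>v<m. snd (lab v) (map (\<lambda>i. \<sigma> (v, i)) [0..<fst (lab v)])) *
        prod_list (map (\<lambda>w. neq2 (\<sigma> (fst w)) (\<sigma> (snd w))) W))"

definition premise_P :: "signature set \<Rightarrow> bool" where
  "premise_P \<F> \<longleftrightarrow>
     (\<forall>m lab W ds. valid_gadget \<F> m lab W ds \<and> length ds = 2 \<longrightarrow>
        (\<exists>c::complex. \<forall>x y. gadget_fn m lab W ds [x, y] = c * neq2 x y)) \<and>
     (\<forall>m lab W ds. valid_gadget \<F> m lab W ds \<and> length ds = 4 \<longrightarrow>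
        (\<exists>(c::complex) \<tau>. \<tau> permutes {0..<4} \<and>
           (\<forall>xs. length xs = 4 \<longrightarrow>
              gadget_fn m lab W ds xs =
                c * neq2 (xs ! \<tau> 0) (xs ! \<tau> 1) * neq2 (xs ! \<tau> 2) (xs ! \<tau> 3))))"

definition network_value ::
  "nat \<Rightarrow> (nat \<Rightarrow> signature) \<Rightarrow> ((nat \<times> nat) \<times> (nat \<times> nat)) list \<Rightarrow> complex" where
  "network_value m lab W = gadget_fn m lab W [] []"

end

theory Submission
  imports Defs "HOL-Library.Product_Lexorder" "HOL-Library.Multiset"
begin

(* Cutting two wires of a closed network leaves a realizable arity-4 gadget, which by (P) is
   c times a product of two disequalities along some perfect matching of its dangling edges.
   Closing it again along either of two different matchings gives c times a positive integer,
   since the union of two perfect matchings on four points consists of even cycles and so has a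
   proper 2-colouring. Hence exchanging the endpoints of two wires never changes whether the
   value vanishes. Such exchanges transform every closed network of m copies of F (arity 2k)
   into the one that joins slots 2i and 2i+1 of every vertex, whose value is the m-th power of
   the value of a single vertex closed in this way. *)

definition ends :: "'a \<times> 'a \<Rightarrow> 'a list" where
  "ends w = [fst w, snd w]"

definition edge_factor :: "('a \<Rightarrow> bool) \<Rightarrow> 'a \<times> 'a \<Rightarrow> complex" where
  "edge_factor \<sigma> w = neq2 (\<sigma> (fst w)) (\<sigma> (snd w))"

definition vertex_weight :: "nat \<Rightarrow> (nat \<Rightarrow> signature) \<Rightarrow> (nat \<times> nat \<Rightarrow> bool) \<Rightarrow> complex" where
  "vertex_weight m lab \<sigma> = (\<Prod>v<m. snd (lab v) (map (\<lambda>i. \<sigma> (v, i)) [0..<fst (lab v)]))"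

lemma ends_eq_lambda: "(\<lambda>w. [fst w, snd w]) = ends"
  by (simp add: ends_def fun_eq_iff)

lemma neq2_eq_of_bool: "neq2 x y = of_bool (x \<noteq> y)"
  by (simp add: neq2_def)

lemma finite_slots [simp]: "finite (slots m lab)"
proof -
  have "slots m lab = Sigma {..<m} (\<lambda>v. {..<fst (lab v)})"
    by (auto simp: slots_def)
  then show ?thesis by simp
qed

lemma finite_bool_lists [simp]: "finite {xs :: bool list. length xs = n}"
  using finite_lists_length_eq[of "UNIV :: bool set" n] by simp

lemma gadget_fn_eq:
  "gadget_fn m lab W ds xs =
     (\<Sum>\<sigma>\<in>{\<sigma> \<in> slots m lab \<rightarrow>\<^sub>E UNIV. \<forall>j<length ds. \<sigma> (ds ! j) = xs ! j}.
        vertex_weight m lab \<sigma> * prod_list (map (edge_factor \<sigma>) W))"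
  unfolding gadget_fn_def vertex_weight_def edge_factor_def by simp

lemma network_value_eq:
  "network_value m lab W =
     (\<Sum>\<sigma>\<in>slots m lab \<rightarrow>\<^sub>E UNIV. vertex_weight m lab \<sigma> * prod_list (map (edge_factor \<sigma>) W))"
  unfolding network_value_def gadget_fn_eq by simp

lemma slots_cong: "(\<And>v. v < m \<Longrightarrow> lab v = lab' v) \<Longrightarrow> slots m lab = slots m lab'"
  by (auto simp: slots_def)

lemma network_value_cong:
  assumes "\<And>v. v < m \<Longrightarrow> lab v = lab' v"
  shows "network_value m lab W = network_value m lab' W"
proof -
  have "vertex_weight m lab \<sigma> = vertex_weight m lab' \<sigma>" for \<sigma>
    unfolding vertex_weight_def using assms by simp
  moreover have "slots m lab = slots m lab'"
    using assms by (rule slots_cong)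
  ultimately show ?thesis
    unfolding network_value_eq by simp
qed

lemma valid_gadget_uniform:
  assumes "valid_gadget {F} m lab W ds" and "F \<in> \<F>"
  shows "valid_gadget \<F> m (\<lambda>_. F) W ds" and "\<And>v. v < m \<Longrightarrow> lab v = F"
proof -
  show lab: "\<And>v. v < m \<Longrightarrow> lab v = F"
    using assms(1) by (simp add: valid_gadget_def)
  show "valid_gadget \<F> m (\<lambda>_. F) W ds"
    using assms slots_cong[of m lab "\<lambda>_. F", OF lab] by (simp add: valid_gadget_def)
qed

lemma valid_gadget_mset_cong:
  assumes "mset (concat (map ends W) @ ds) = mset (concat (map ends W') @ ds')"
  shows "valid_gadget \<F> m lab W ds \<longleftrightarrow> valid_gadget \<F> m lab W' ds'"
  unfolding valid_gadget_def ends_eq_lambda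
  using mset_eq_imp_distinct_iff[OF assms] mset_eq_setD[OF assms] by simp

lemma sum_PiE_by_values_at:
  fixes G :: "('a \<Rightarrow> bool) \<Rightarrow> 'b :: comm_semiring_1"
  assumes "finite S"
  shows "(\<Sum>\<sigma>\<in>S \<rightarrow>\<^sub>E UNIV. G \<sigma> * Q (map \<sigma> ds)) =
    (\<Sum>xs | length xs = length ds.
       Q xs * (\<Sum>\<sigma>\<in>{\<sigma> \<in> S \<rightarrow>\<^sub>E UNIV. \<forall>j<length ds. \<sigma> (ds ! j) = xs ! j}. G \<sigma>))"
proof -
  let ?A = "S \<rightarrow>\<^sub>E (UNIV :: bool set)"
  have "(\<Sum>xs | length xs = length ds.
          Q xs * (\<Sum>\<sigma>\<in>{\<sigma> \<in> ?A. \<forall>j<length ds. \<sigma> (ds ! j) = xs ! j}. G \<sigma>))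
      = (\<Sum>xs | length xs = length ds. \<Sum>\<sigma>\<in>{\<sigma> \<in> ?A. map \<sigma> ds = xs}. G \<sigma> * Q (map \<sigma> ds))"
  proof (rule sum.cong[OF refl])
    fix xs :: "bool list"
    assume "xs \<in> {xs. length xs = length ds}"
    then have "{\<sigma> \<in> ?A. \<forall>j<length ds. \<sigma> (ds ! j) = xs ! j} = {\<sigma> \<in> ?A. map \<sigma> ds = xs}"
      by (auto simp: list_eq_iff_nth_eq)
    then show "Q xs * (\<Sum>\<sigma>\<in>{\<sigma> \<in> ?A. \<forall>j<length ds. \<sigma> (ds ! j) = xs ! j}. G \<sigma>)
        = (\<Sum>\<sigma>\<in>{\<sigma> \<in> ?A. map \<sigma> ds = xs}. G \<sigma> * Q (map \<sigma> ds))"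
      by (simp add: sum_distrib_left mult.commute)
  qed
  also have "\<dots> = (\<Sum>\<sigma>\<in>?A. G \<sigma> * Q (map \<sigma> ds))"
    using assms by (intro sum.group) (auto simp: finite_PiE)
  finally show ?thesis ..
qed

lemma network_value_append:
  assumes "\<And>\<sigma>. prod_list (map (edge_factor \<sigma>) E) = Q (map \<sigma> ds)"
  shows "network_value m lab (E @ W) = (\<Sum>xs | length xs = length ds. Q xs * gadget_fn m lab W ds xs)"
proof -
  have "network_value m lab (E @ W) = (\<Sum>\<sigma>\<in>slots m lab \<rightarrow>\<^sub>E UNIV.
      (vertex_weight m lab \<sigma> * prod_list (map (edge_factor \<sigma>) W)) * Q (map \<sigma> ds))"
    unfolding network_value_eq by (simp add: assms ac_simps)
  also have "\<dots> = (\<Sum>xs | length xs = length ds. Q xs * gadget_fn m lab W ds xs)"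
    unfolding gadget_fn_eq by (rule sum_PiE_by_values_at) simp
  finally show ?thesis .
qed

definition sort_pair :: "'a :: linorder \<times> 'a \<Rightarrow> 'a \<times> 'a" where
  "sort_pair w = (min (fst w) (snd w), max (fst w) (snd w))"

definition same_wiring :: "('a :: linorder \<times> 'a) list \<Rightarrow> ('a \<times> 'a) list \<Rightarrow> bool" where
  "same_wiring W W' \<longleftrightarrow> mset (map sort_pair W) = mset (map sort_pair W')"

lemma set_ends_sort_pair [simp]: "set (ends (sort_pair w)) = set (ends w)"
  by (auto simp: ends_def sort_pair_def min_def max_def)

lemma edge_factor_sort_pair [simp]: "edge_factor \<sigma> (sort_pair w) = edge_factor \<sigma> w"
  by (auto simp: edge_factor_def sort_pair_def min_def max_def neq2_def)

lemma mset_ends_sort_pair [simp]: "mset (ends (sort_pair w)) = mset (ends w)"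
  by (auto simp: ends_def sort_pair_def min_def max_def)

lemma mset_concat_ends_same_wiring:
  assumes "same_wiring W W'"
  shows "mset (concat (map ends W)) = mset (concat (map ends W'))"
proof -
  have "mset (concat (map ends V)) = (\<Sum>w\<in>#mset (map sort_pair V). mset (ends w))" for V
    by (induction V) auto
  from this[of W] this[of W'] show ?thesis
    using assms by (simp add: same_wiring_def)
qed

lemma valid_gadget_same_wiring:
  "same_wiring W W' \<Longrightarrow> valid_gadget \<F> m lab W ds \<longleftrightarrow> valid_gadget \<F> m lab W' ds"
  by (rule valid_gadget_mset_cong) (simp add: mset_concat_ends_same_wiring)

lemma network_value_same_wiring:
  assumes "same_wiring W W'"
  shows "network_value m lab W = network_value m lab W'"
proof -
  have "prod_list (map (edge_factor \<sigma>) V) = (\<Prod>w\<in>#mset (map sort_pair V). edge_factor \<sigma> w)" for \<sigma> V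
    by (induction V) auto
  from this[of _ W] this[of _ W'] show ?thesis
    using assms by (simp add: network_value_eq same_wiring_def)
qed

lemma distinct_map_sort_pair:
  "distinct (concat (map ends W)) \<Longrightarrow> distinct (map sort_pair W)"
proof (induction W)
  case (Cons w W)
  have "sort_pair w \<notin> sort_pair ` set W"
  proof
    assume "sort_pair w \<in> sort_pair ` set W"
    then obtain w' where "w' \<in> set W" and "set (ends w) = set (ends w')"
      by (metis imageE set_ends_sort_pair)
    then have "fst w \<in> set (concat (map ends W))"
      by (auto simp: ends_def)
    then show False
      using Cons.prems by (simp add: ends_def)
  qed
  then show ?case
    using Cons by simp
qed simp

lemma same_wiring_edge_at:
  assumes "s \<in> set (concat (map ends W))"
  obtains s' R where "same_wiring W ((s, s') # R)"
proof -
  obtain w where "w \<in> set W" and s: "s \<in> set (ends w)"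
    using assms by auto
  then obtain W1 W2 where W: "W = W1 @ w # W2"
    by (meson split_list)
  define s' where "s' = (if fst w = s then snd w else fst w)"
  have "sort_pair (s, s') = sort_pair w"
    using s by (auto simp: s'_def ends_def sort_pair_def min.commute max.commute)
  then have "same_wiring W ((s, s') # W1 @ W2)"
    by (simp add: W same_wiring_def)
  then show ?thesis ..
qed

lemma same_wiring_edges_at:
  assumes "p \<in> set (concat (map ends W))" and "q \<in> set (concat (map ends W))"
    and "p \<noteq> q" and "sort_pair (p, q) \<notin> sort_pair ` set W"
  obtains p' q' R where "same_wiring W ((p, p') # (q, q') # R)"
proof -
  obtain p' R where R: "same_wiring W ((p, p') # R)"
    using assms(1) by (rule same_wiring_edge_at)
  have wire_ends: "set (concat (map ends W)) = {p, p'} \<union> set (concat (map ends R))"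
    using mset_eq_setD[OF mset_concat_ends_same_wiring[OF R]] by (auto simp: ends_def)
  have "sort_pair (p, p') \<in> sort_pair ` set W"
    using mset_eq_setD[OF R[unfolded same_wiring_def]] by auto
  then have "q \<noteq> p'"
    using assms(4) by auto
  then have "q \<in> set (concat (map ends R))"
    using assms(2,3) wire_ends by auto
  then obtain q' R' where "same_wiring R ((q, q') # R')"
    by (rule same_wiring_edge_at)
  then have "same_wiring W ((p, p') # (q, q') # R')"
    using R by (simp add: same_wiring_def)
  then show ?thesis ..
qed

section \<open>Exchanging the endpoints of two wires\<close>

lemma two_matchings_common_colouring:
  fixes a b c d :: nat
  assumes "distinct [a, b, c, d]" and "{a, b, c, d} \<subseteq> {0..<4}"
    and "(p, q, r, s) \<in> {(0, 1, 2, 3), (0, 2, 1, 3)}"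
  shows "\<exists>xs :: bool list. length xs = 4 \<and>
           xs ! p \<noteq> xs ! q \<and> xs ! r \<noteq> xs ! s \<and> xs ! a \<noteq> xs ! b \<and> xs ! c \<noteq> xs ! d"
proof -
  have cases4: "x < 4 \<Longrightarrow> x = 0 \<or> x = 1 \<or> x = 2 \<or> x = 3" for x :: nat
    by auto
  have "a < 4" "b < 4" "c < 4" "d < 4"
    using assms(2) by auto
  have pqrs: "p = 0 \<and> q = 1 \<and> r = 2 \<and> s = 3 \<or> p = 0 \<and> q = 2 \<and> r = 1 \<and> s = 3"
    using assms(3) by simp
  have "\<exists>xs\<in>{[True, False, True, False], [True, False, False, True], [True, True, False, False]}.
      length xs = 4 \<and> xs ! p \<noteq> xs ! q \<and> xs ! r \<noteq> xs ! s \<and> xs ! a \<noteq> xs ! b \<and> xs ! c \<noteq> xs ! d"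
    using cases4[OF \<open>a < 4\<close>] cases4[OF \<open>b < 4\<close>] cases4[OF \<open>c < 4\<close>] cases4[OF \<open>d < 4\<close>]
      pqrs assms(1)
    by (elim disjE conjE) simp_all
  then show ?thesis
    by blast
qed

lemma sum_two_matchings_neq_0:
  assumes "\<tau> permutes {0..<4}" and "(p, q, r, s) \<in> {(0, 1, 2, 3), (0, 2, 1, 3)}"
  shows "(\<Sum>xs | length xs = 4. neq2 (xs ! p) (xs ! q) * neq2 (xs ! r) (xs ! s) *
            (neq2 (xs ! \<tau> 0) (xs ! \<tau> 1) * neq2 (xs ! \<tau> 2) (xs ! \<tau> 3))) \<noteq> 0"
proof -
  let ?P = "\<lambda>xs :: bool list. xs ! p \<noteq> xs ! q \<and> xs ! r \<noteq> xs ! s \<and>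
      xs ! \<tau> 0 \<noteq> xs ! \<tau> 1 \<and> xs ! \<tau> 2 \<noteq> xs ! \<tau> 3"
  have "distinct [\<tau> 0, \<tau> 1, \<tau> 2, \<tau> 3]" and "{\<tau> 0, \<tau> 1, \<tau> 2, \<tau> 3} \<subseteq> {0..<4}"
    using permutes_inj[OF assms(1)] permutes_in_image[OF assms(1)] by (auto simp: inj_eq)
  then obtain xs where "length xs = 4" and "?P xs"
    using two_matchings_common_colouring[of "\<tau> 0" "\<tau> 1" "\<tau> 2" "\<tau> 3" p q r s] assms(2) by blast
  then have "{xs. length xs = 4} \<inter> {xs. ?P xs} \<noteq> {}"
    by blast
  then have "card ({xs. length xs = 4} \<inter> {xs. ?P xs}) \<noteq> 0"
    by (simp add: card_eq_0_iff)
  moreover have "(\<Sum>xs | length xs = 4. neq2 (xs ! p) (xs ! q) * neq2 (xs ! r) (xs ! s) *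
      (neq2 (xs ! \<tau> 0) (xs ! \<tau> 1) * neq2 (xs ! \<tau> 2) (xs ! \<tau> 3)))
      = of_nat (card ({xs. length xs = 4} \<inter> {xs. ?P xs}))"
    by (simp only: neq2_eq_of_bool mult.assoc flip: of_bool_conj) simp
  ultimately show ?thesis
    by simp
qed

lemma valid_gadget_cut_two_wires:
  "valid_gadget \<F> m lab ((a, b) # (c, d) # W) [] \<Longrightarrow> valid_gadget \<F> m lab W [a, b, c, d]"
  by (subst valid_gadget_mset_cong[of _ _ "(a, b) # (c, d) # W" "[]"]) (simp_all add: ends_def)

lemma valid_gadget_swap_ends:
  "valid_gadget \<F> m lab ((a, b) # (c, d) # W) [] \<Longrightarrow>
   valid_gadget \<F> m lab ((a, c) # (b, d) # W) []"
  by (subst valid_gadget_mset_cong[of _ _ "(a, b) # (c, d) # W" "[]"])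
    (simp_all add: ends_def add_mset_commute)

lemma network_value_swap_ends_eq_0_iff:
  assumes "premise_P \<F>" and "valid_gadget \<F> m lab ((a, b) # (c, d) # W) []"
  shows "network_value m lab ((a, b) # (c, d) # W) = 0 \<longleftrightarrow>
         network_value m lab ((a, c) # (b, d) # W) = 0"
proof -
  have "valid_gadget \<F> m lab W [a, b, c, d]"
    using assms(2) by (rule valid_gadget_cut_two_wires)
  then have "\<exists>c0 \<tau>. \<tau> permutes {0..<4} \<and> (\<forall>xs. length xs = 4 \<longrightarrow>
      gadget_fn m lab W [a, b, c, d] xs = c0 * neq2 (xs ! \<tau> 0) (xs ! \<tau> 1) * neq2 (xs ! \<tau> 2) (xs ! \<tau> 3))"
    using assms(1) unfolding premise_P_def by simp
  then obtain c0 \<tau> where \<tau>: "\<tau> permutes {0..<4}" and gadget: "\<And>xs. length xs = 4 \<Longrightarrow>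
      gadget_fn m lab W [a, b, c, d] xs = c0 * neq2 (xs ! \<tau> 0) (xs ! \<tau> 1) * neq2 (xs ! \<tau> 2) (xs ! \<tau> 3)"
    by blast
  have closure: "network_value m lab (E @ W) = c0 *
      (\<Sum>xs | length xs = 4. Q xs * (neq2 (xs ! \<tau> 0) (xs ! \<tau> 1) * neq2 (xs ! \<tau> 2) (xs ! \<tau> 3)))"
    if "\<And>\<sigma>. prod_list (map (edge_factor \<sigma>) E) = Q (map \<sigma> [a, b, c, d])" for E Q
  proof -
    have "length [a, b, c, d] = 4"
      by simp
    then have "network_value m lab (E @ W) =
        (\<Sum>xs | length xs = 4. Q xs * gadget_fn m lab W [a, b, c, d] xs)"
      using network_value_append[of E Q "[a, b, c, d]"] that by metis
    then show ?thesis
      by (simp add: gadget sum_distrib_left ac_simps)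
  qed
  have "network_value m lab ((a, b) # (c, d) # W) = c0 *
      (\<Sum>xs | length xs = 4. neq2 (xs ! 0) (xs ! 1) * neq2 (xs ! 2) (xs ! 3) *
         (neq2 (xs ! \<tau> 0) (xs ! \<tau> 1) * neq2 (xs ! \<tau> 2) (xs ! \<tau> 3)))"
    using closure[of "[(a, b), (c, d)]" "\<lambda>xs. neq2 (xs ! 0) (xs ! 1) * neq2 (xs ! 2) (xs ! 3)"]
    by (simp add: edge_factor_def)
  moreover have "network_value m lab ((a, c) # (b, d) # W) = c0 *
      (\<Sum>xs | length xs = 4. neq2 (xs ! 0) (xs ! 2) * neq2 (xs ! 1) (xs ! 3) *
         (neq2 (xs ! \<tau> 0) (xs ! \<tau> 1) * neq2 (xs ! \<tau> 2) (xs ! \<tau> 3)))"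
    using closure[of "[(a, c), (b, d)]" "\<lambda>xs. neq2 (xs ! 0) (xs ! 2) * neq2 (xs ! 1) (xs ! 3)"]
    by (simp add: edge_factor_def)
  ultimately show ?thesis
    using sum_two_matchings_neq_0[OF \<tau>] by simp
qed

section \<open>Reduction to the canonical wiring\<close>

definition canonical_wiring :: "nat \<Rightarrow> nat \<Rightarrow> ((nat \<times> nat) \<times> (nat \<times> nat)) list" where
  "canonical_wiring k m = concat (map (\<lambda>v. map (\<lambda>i. ((v, 2 * i), (v, 2 * i + 1))) [0..<k]) [0..<m])"

lemma set_canonical_wiring:
  "set (canonical_wiring k m) = {((v, 2 * i), (v, 2 * i + 1)) | v i. v < m \<and> i < k}"
  by (auto simp: canonical_wiring_def)

lemma length_canonical_wiring: "length (canonical_wiring k m) = m * k"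
  by (induction m) (simp_all add: canonical_wiring_def)

lemma distinct_canonical_wiring: "distinct (canonical_wiring k m)"
proof (rule card_distinct)
  have "set (canonical_wiring k m) = (\<lambda>(v, i). ((v, 2 * i), (v, 2 * i + 1))) ` ({..<m} \<times> {..<k})"
    by (auto simp: set_canonical_wiring)
  moreover have "inj_on (\<lambda>(v, i). ((v, 2 * i), (v :: nat, 2 * i + 1 :: nat))) ({..<m} \<times> {..<k})"
    by (auto simp: inj_on_def)
  ultimately show "card (set (canonical_wiring k m)) = length (canonical_wiring k m)"
    by (simp add: card_image card_cartesian_product length_canonical_wiring)
qed

lemma map_sort_pair_canonical_wiring: "map sort_pair (canonical_wiring k m) = canonical_wiring k m"
  by (rule map_idI) (auto simp: set_canonical_wiring sort_pair_def less_eq_prod_def)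

lemma sort_pair_eq_Pair: "sort_pair (x, y) = (s, t) \<Longrightarrow> x = s \<and> y = t \<or> x = t \<and> y = s"
  by (auto simp: sort_pair_def min_def max_def split: if_splits)

lemma canonical_wiring_partner_unique:
  assumes "sort_pair (x, y) \<in> set (canonical_wiring k m)"
    and "sort_pair (x, z) \<in> set (canonical_wiring k m)"
  shows "y = z"
  using assms by (auto simp: set_canonical_wiring dest!: sort_pair_eq_Pair) presburger+

lemma card_slots_uniform: "card (slots m (\<lambda>_. F)) = m * fst F"
proof -
  have "slots m (\<lambda>_. F) = {..<m} \<times> {..<fst F}"
    by (auto simp: slots_def)
  then show ?thesis
    by (simp add: card_cartesian_product)
qed

lemma length_concat_ends: "length (concat (map ends W)) = 2 * length W"
  by (induction W) (simp_all add: ends_def)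

lemma same_wiring_canonical_if_covers:
  assumes "valid_gadget \<F> m (\<lambda>_. F) W []" and "fst F = 2 * k"
    and "set (canonical_wiring k m) \<subseteq> sort_pair ` set W"
  shows "same_wiring W (canonical_wiring k m)"
proof -
  have wire_ends: "distinct (concat (map ends W))" "set (concat (map ends W)) = slots m (\<lambda>_. F)"
    using assms(1) by (simp_all add: valid_gadget_def ends_eq_lambda)
  then have "2 * length W = m * (2 * k)"
    using distinct_card[OF wire_ends(1)] card_slots_uniform[of m F] assms(2)
    by (simp add: length_concat_ends)
  moreover have dist: "distinct (map sort_pair W)"
    using wire_ends(1) by (rule distinct_map_sort_pair)
  ultimately have "card (set (canonical_wiring k m)) = card (set (map sort_pair W))"
    using distinct_card[OF dist] distinct_card[OF distinct_canonical_wiring]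
    by (simp add: length_canonical_wiring)
  then have "set (canonical_wiring k m) = set (map sort_pair W)"
    using assms(3) by (intro card_subset_eq) auto
  then show ?thesis
    using set_eq_iff_mset_eq_distinct[OF distinct_canonical_wiring dist]
    by (simp add: same_wiring_def map_sort_pair_canonical_wiring)
qed

lemma swap_towards_canonical_wiring:
  assumes "premise_P \<F>" and "valid_gadget \<F> m (\<lambda>_. F) W []" and "fst F = 2 * k"
    and "(p, q) \<in> set (canonical_wiring k m)" and "(p, q) \<notin> sort_pair ` set W"
  obtains W' where "valid_gadget \<F> m (\<lambda>_. F) W' []"
    and "network_value m (\<lambda>_. F) W' = 0 \<longleftrightarrow> network_value m (\<lambda>_. F) W = 0"
    and "set (canonical_wiring k m) - sort_pair ` set W' \<subset>
         set (canonical_wiring k m) - sort_pair ` set W"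
proof -
  let ?C = "set (canonical_wiring k m)"
  have wire_ends: "set (concat (map ends W)) = slots m (\<lambda>_. F)"
    using assms(2) by (simp add: valid_gadget_def ends_eq_lambda)
  obtain v i where v: "v < m" "i < k" and p: "p = (v, 2 * i)" and q: "q = (v, 2 * i + 1)"
    using assms(4) by (auto simp: set_canonical_wiring)
  have pq: "sort_pair (p, q) = (p, q)" "sort_pair (q, p) = (p, q)"
    by (simp_all add: p q sort_pair_def)
  have slots: "p \<in> set (concat (map ends W))" "q \<in> set (concat (map ends W))"
    unfolding wire_ends using v assms(3) by (auto simp: slots_def p q)
  obtain p' q' R where R: "same_wiring W ((p, p') # (q, q') # R)"
    by (rule same_wiring_edges_at[OF slots]) (use assms(5) pq in \<open>simp_all add: p q\<close>)
  have V: "valid_gadget \<F> m (\<lambda>_. F) ((p, p') # (q, q') # R) []"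
    using assms(2) valid_gadget_same_wiring[OF R] by simp
  then have "distinct [p, p', q, q']"
    by (simp add: valid_gadget_def)
  let ?W' = "(p, q) # (p', q') # R"
  have "valid_gadget \<F> m (\<lambda>_. F) ?W' []"
    using V by (rule valid_gadget_swap_ends)
  moreover have "network_value m (\<lambda>_. F) ?W' = 0 \<longleftrightarrow> network_value m (\<lambda>_. F) W = 0"
    using network_value_swap_ends_eq_0_iff[OF assms(1) V] network_value_same_wiring[OF R] by simp
  moreover have "?C - sort_pair ` set ?W' \<subset> ?C - sort_pair ` set W"
  proof -
    have "sort_pair (p, p') \<notin> ?C" "sort_pair (q, q') \<notin> ?C"
      using canonical_wiring_partner_unique[of p q k m p']
        canonical_wiring_partner_unique[of q p k m q'] \<open>distinct [p, p', q, q']\<close> pq assms(4) by auto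
    moreover have "sort_pair ` set W = {sort_pair (p, p'), sort_pair (q, q')} \<union> sort_pair ` set R"
      using mset_eq_setD[OF R[unfolded same_wiring_def]] by simp
    ultimately show ?thesis
      using assms(4,5) pq by auto
  qed
  ultimately show ?thesis
    using that by blast
qed

lemma network_value_eq_0_iff_canonical:
  assumes "premise_P \<F>" and "fst F = 2 * k" and "valid_gadget \<F> m (\<lambda>_. F) W []"
  shows "network_value m (\<lambda>_. F) W = 0 \<longleftrightarrow> network_value m (\<lambda>_. F) (canonical_wiring k m) = 0"
  using assms(3)
proof (induction "card (set (canonical_wiring k m) - sort_pair ` set W)" arbitrary: W rule: less_induct)
  case less
  show ?case
  proof (cases "set (canonical_wiring k m) \<subseteq> sort_pair ` set W")
    case True
    then show ?thesis
      using same_wiring_canonical_if_covers[OF less.prems assms(2)] network_value_same_wiring by metis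
  next
    case False
    then obtain p q where "(p, q) \<in> set (canonical_wiring k m)" "(p, q) \<notin> sort_pair ` set W"
      by (metis subsetI surj_pair)
    with assms(1) less.prems assms(2) obtain W' where "valid_gadget \<F> m (\<lambda>_. F) W' []"
      and "network_value m (\<lambda>_. F) W' = 0 \<longleftrightarrow> network_value m (\<lambda>_. F) W = 0"
      and "set (canonical_wiring k m) - sort_pair ` set W' \<subset> set (canonical_wiring k m) - sort_pair ` set W"
      by (rule swap_towards_canonical_wiring)
    moreover from this(3) have "card (set (canonical_wiring k m) - sort_pair ` set W')
        < card (set (canonical_wiring k m) - sort_pair ` set W)"
      by (rule psubset_card_mono[rotated]) simp
    ultimately show ?thesis
      using less.hyps by blast
  qed
qed

section \<open>The value of the canonical network\<close>

definition loop_value :: "signature \<Rightarrow> nat \<Rightarrow> complex" where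
  "loop_value F k =
     (\<Sum>xs | length xs = fst F. snd F xs * (\<Prod>i<k. neq2 (xs ! (2 * i)) (xs ! (2 * i + 1))))"

lemma sum_PiE_slots_uniform:
  fixes h :: "bool list \<Rightarrow> 'b :: comm_semiring_1"
  shows "(\<Sum>\<sigma>\<in>slots m (\<lambda>_. F) \<rightarrow>\<^sub>E UNIV. \<Prod>v<m. h (map (\<lambda>i. \<sigma> (v, i)) [0..<fst F])) =
         (\<Prod>v<m. \<Sum>xs | length xs = fst F. h xs)"
proof -
  let ?L = "{xs :: bool list. length xs = fst F}"
  have "(\<Prod>v<m. \<Sum>xs\<in>?L. h xs) = (\<Sum>g\<in>{..<m} \<rightarrow>\<^sub>E ?L. \<Prod>v<m. h (g v))"
    by (rule prod_sum_PiE) auto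
  also have "\<dots> = (\<Sum>\<sigma>\<in>slots m (\<lambda>_. F) \<rightarrow>\<^sub>E UNIV. \<Prod>v<m. h (map (\<lambda>i. \<sigma> (v, i)) [0..<fst F]))"
  proof (rule sum.reindex_bij_witness[where i = "\<lambda>\<sigma>. \<lambda>v\<in>{..<m}. map (\<lambda>i. \<sigma> (v, i)) [0..<fst F]"
        and j = "\<lambda>g. \<lambda>s\<in>slots m (\<lambda>_. F). g (fst s) ! snd s"])
    fix g
    assume g: "g \<in> {..<m} \<rightarrow>\<^sub>E ?L"
    then have "length (g v) = fst F" if "v < m" for v
      using that by auto
    then have rows: "map (\<lambda>i. (\<lambda>s\<in>slots m (\<lambda>_. F). g (fst s) ! snd s) (v, i)) [0..<fst F] = g v"
      if "v < m" for v
      using that by (simp add: slots_def list_eq_iff_nth_eq)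
    show "(\<lambda>v\<in>{..<m}. map (\<lambda>i. (\<lambda>s\<in>slots m (\<lambda>_. F). g (fst s) ! snd s) (v, i)) [0..<fst F]) = g"
      using g rows by (auto simp: PiE_def extensional_def fun_eq_iff)
    show "(\<Prod>v<m. h (map (\<lambda>i. (\<lambda>s\<in>slots m (\<lambda>_. F). g (fst s) ! snd s) (v, i)) [0..<fst F])) =
        (\<Prod>v<m. h (g v))"
      using rows by simp
  qed (auto simp: slots_def PiE_def extensional_def fun_eq_iff)
  finally show ?thesis ..
qed

lemma prod_edge_factor_canonical_wiring:
  "prod_list (map (edge_factor \<sigma>) (canonical_wiring k m)) =
     (\<Prod>v<m. \<Prod>i<k. neq2 (\<sigma> (v, 2 * i)) (\<sigma> (v, 2 * i + 1)))"
  by (induction m)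
    (simp_all add: canonical_wiring_def edge_factor_def atLeast0LessThan
      flip: prod.distinct_set_conv_list)

lemma network_value_canonical_wiring:
  assumes "fst F = 2 * k"
  shows "network_value m (\<lambda>_. F) (canonical_wiring k m) = loop_value F k ^ m"
proof -
  let ?h = "\<lambda>xs. snd F xs * (\<Prod>i<k. neq2 (xs ! (2 * i)) (xs ! (2 * i + 1)))"
  have "vertex_weight m (\<lambda>_. F) \<sigma> * prod_list (map (edge_factor \<sigma>) (canonical_wiring k m)) =
      (\<Prod>v<m. ?h (map (\<lambda>i. \<sigma> (v, i)) [0..<fst F]))" for \<sigma>
    unfolding vertex_weight_def prod_edge_factor_canonical_wiring prod.distrib[symmetric]
    by (simp add: assms)
  then have "network_value m (\<lambda>_. F) (canonical_wiring k m) =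
      (\<Sum>\<sigma>\<in>slots m (\<lambda>_. F) \<rightarrow>\<^sub>E UNIV. \<Prod>v<m. ?h (map (\<lambda>i. \<sigma> (v, i)) [0..<fst F]))"
    by (simp only: network_value_eq)
  also have "\<dots> = (\<Prod>v<m. \<Sum>xs | length xs = fst F. ?h xs)"
    by (rule sum_PiE_slots_uniform)
  finally show ?thesis
    by (simp add: loop_value_def)
qed

theorem mainTheorem10:
  fixes \<F> :: "signature set" and F :: signature
  assumes "premise_P \<F>"
    and "F \<in> \<F>"
    and "even (fst F)"
  shows "(\<forall>m lab W. 0 < m \<and> valid_gadget {F} m lab W [] \<longrightarrow> network_value m lab W = 0)
       \<or> (\<forall>m lab W. 0 < m \<and> valid_gadget {F} m lab W [] \<longrightarrow> network_value m lab W \<noteq> 0)"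
proof -
  obtain k where k: "fst F = 2 * k"
    using assms(3) by (rule evenE)
  have "network_value m lab W = 0 \<longleftrightarrow> loop_value F k = 0"
    if "0 < m" and "valid_gadget {F} m lab W []" for m lab W
  proof -
    have "network_value m lab W = network_value m (\<lambda>_. F) W"
      using valid_gadget_uniform(2)[OF that(2) assms(2)] by (rule network_value_cong)
    then show ?thesis
      using network_value_eq_0_iff_canonical[OF assms(1) k valid_gadget_uniform(1)[OF that(2) assms(2)]]
        network_value_canonical_wiring[OF k] that(1) by simp
  qed
  then show ?thesis
    by blast
qed

end
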